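(* Let $N\ge0$ be an integer, let $\epsilon_1,\dots,\epsilon_N$ be i.i.d. Rademacher variables, and let $E=\sum_{i=1}^N\epsilon_i$ (so $E$ has the law of $2\,\mathrm{Binom}(N,\tfrac12)-N$). Then for every $b>1$, $$\mathbb E\big[\max\{E-\tfrac1bN,0\}\big]\le\frac{1-\frac1b}{e\cdot D\big(\frac{1+1/b}{2}\,\big\|\,\frac12\big)}.$$
   Context: $D(p\|q)=p\log\frac pq+(1-p)\log\frac{1-p}{1-q}$ is the binary Kullback–Leibler divergence. *)

theory Defs
  imports "HOL-Probability.Probability"
begin

definition binKL :: "real \<Rightarrow> real \<Rightarrow> real" where
  "binKL p q = p * ln (p / q) + (1 - p) * ln ((1 - p) / (1 - q))"

definition rademacher_vec :: "nat \<Rightarrow> (nat \<Rightarrow> real) pmf" where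
  "rademacher_vec N = Pi_pmf {1..N} 0 (\<lambda>_. pmf_of_set {-1, 1})"

end

theory Submission
  imports Defs
begin

text \<open>
  A Chernoff argument. Put \<open>a = 1/b\<close> and \<open>\<lambda> = artanh a \<ge> 0\<close>. Since \<open>E \<le> N\<close>, the excess
  \<open>max (E - a N) 0\<close> is at most \<open>(1 - a) N exp (\<lambda> (E - a N))\<close>, whose expectation is
  \<open>(1 - a) N (exp (-a \<lambda>) cosh \<lambda>)\<^sup>N\<close>. For this \<open>\<lambda>\<close> the factor \<open>exp (-a \<lambda>) cosh \<lambda>\<close> equals
  \<open>exp (-D)\<close> with \<open>D = D((1+a)/2 \<parallel> 1/2) > 0\<close>, and \<open>N exp (-N D) \<le> 1/(e D)\<close>.
\<close>

lemma mult_ln_gt_minus_one: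
  fixes x :: real
  assumes "0 < x" "x \<noteq> 1"
  shows "x - 1 < x * ln x"
proof -
  have "ln (1 / x) < 1 / x - 1"
    using ln_le_minus_one[of "1 / x"] ln_eq_minus_one[of "1 / x"] assms by fastforce
  then have "x * ln (1 / x) < x * (1 / x - 1)"
    using assms(1) by (rule mult_strict_left_mono)
  moreover have "x * ln (1 / x) = - (x * ln x)" and "x * (1 / x - 1) = 1 - x"
    using assms(1) by (simp_all add: ln_div right_diff_distrib)
  ultimately show ?thesis
    by linarith
qed

lemma binKL_half_eq:
  fixes a :: real
  assumes "-1 < a" "a < 1"
  shows "binKL ((1 + a) / 2) (1 / 2) = ((1 + a) * ln (1 + a) + (1 - a) * ln (1 - a)) / 2"
proof -
  have "1 - (1 + a) / 2 = (1 - a) / 2" and "(1 + a) / 2 / (1 / 2) = 1 + a"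
    and "(1 - a) / 2 / (1 - 1 / 2) = 1 - a"
    by (simp_all add: field_simps)
  then show ?thesis
    unfolding binKL_def by (simp only:) (simp add: field_simps)
qed

lemma binKL_half_pos:
  fixes a :: real
  assumes "-1 < a" "a < 1" "a \<noteq> 0"
  shows "0 < binKL ((1 + a) / 2) (1 / 2)"
  using mult_ln_gt_minus_one[of "1 + a"] mult_ln_gt_minus_one[of "1 - a"] assms
  by (simp add: binKL_half_eq)

lemma artanh_nonneg:
  fixes a :: real
  assumes "0 \<le> a" "a < 1"
  shows "0 \<le> artanh a"
  using assms by (simp add: artanh_def)

lemma exp_artanh_mult_cosh:
  fixes a :: real
  assumes "-1 < a" "a < 1"
  shows "exp (- (a * artanh a)) * cosh (artanh a) = exp (- binKL ((1 + a) / 2) (1 / 2))"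
proof -
  define l where "l = artanh a"
  have "exp l * exp l = (1 + a) / (1 - a)"
    using assms by (simp add: l_def artanh_def flip: exp_add)
  have "cosh l = exp (- l) * (1 + exp l * exp l) / 2"
    by (simp add: cosh_def exp_minus field_simps)
  also have "1 + exp l * exp l = 2 / (1 - a)"
    using \<open>exp l * exp l = (1 + a) / (1 - a)\<close> assms by (simp add: field_simps)
  finally have "cosh l = exp (- l) / (1 - a)"
    using assms by (simp add: field_simps)
  moreover have "exp (- ((1 + a) * l + ln (1 - a))) = exp (- (a * l)) * exp (- l) / exp (ln (1 - a))"
    by (simp add: algebra_simps flip: exp_add exp_diff)
  ultimately have "exp (- (a * l)) * cosh l = exp (- ((1 + a) * l + ln (1 - a)))"
    using assms by simp
  also have "(1 + a) * l + ln (1 - a) = binKL ((1 + a) / 2) (1 / 2)"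
    using assms by (simp add: binKL_half_eq l_def artanh_def ln_div field_simps)
  finally show ?thesis
    unfolding l_def .
qed

lemma mult_exp_neg_le:
  fixes t :: real
  shows "t * exp (- t) \<le> exp (- 1)"
proof -
  have "t * exp (- t) \<le> exp (t - 1) * exp (- t)"
    using exp_ge_add_one_self[of "t - 1"] by (intro mult_right_mono) auto
  then show ?thesis
    by (simp flip: exp_add)
qed

lemma rademacher_vec_sum_le:
  assumes "\<epsilon> \<in> set_pmf (rademacher_vec N)"
  shows "(\<Sum>i\<in>{1..N}. \<epsilon> i) \<le> real N"
proof -
  have "\<epsilon> i \<le> 1" if "i \<in> {1..N}" for i
    using assms that by (auto simp: rademacher_vec_def set_Pi_pmf PiE_dflt_def)
  then have "(\<Sum>i\<in>{1..N}. \<epsilon> i) \<le> (\<Sum>i\<in>{1..N}. 1)"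
    by (rule sum_mono)
  then show ?thesis
    by simp
qed

lemma rademacher_vec_mgf:
  "measure_pmf.expectation (rademacher_vec N) (\<lambda>\<epsilon>. exp (l * (\<Sum>i\<in>{1..N}. \<epsilon> i)))
     = cosh l ^ N"
proof -
  have "measure_pmf.expectation (rademacher_vec N) (\<lambda>\<epsilon>. \<Prod>i\<in>{1..N}. exp (l * \<epsilon> i))
      = (\<Prod>i\<in>{1..N}. measure_pmf.expectation (pmf_of_set {-1, 1}) (\<lambda>v. exp (l * v)))"
    unfolding rademacher_vec_def
    by (intro expectation_prod_Pi_pmf integrable_measure_pmf_finite) auto
  also have "measure_pmf.expectation (pmf_of_set {-1, 1}) (\<lambda>v. exp (l * v)) = cosh l"
    by (subst integral_pmf_of_set) (auto simp: cosh_def)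
  finally show ?thesis
    by (simp add: exp_sum sum_distrib_left)
qed

lemma max_le_mult_exp:
  fixes x c l :: real
  assumes "x \<le> c" "0 \<le> c" "0 \<le> l"
  shows "max x 0 \<le> c * exp (l * x)"
proof (cases "0 \<le> x")
  case True
  then have "c \<le> c * exp (l * x)"
    using assms by (intro mult_le_cancel_left1[THEN iffD2]) auto
  then show ?thesis
    using True assms(1) by (simp add: max_def)
qed (use assms in simp)

lemma expectation_rademacher_excess_le:
  fixes a l :: real
  assumes "a \<le> 1" "0 \<le> l"
  shows "measure_pmf.expectation (rademacher_vec N)
           (\<lambda>\<epsilon>. max ((\<Sum>i\<in>{1..N}. \<epsilon> i) - a * real N) 0)
         \<le> (1 - a) * real N * (exp (- (a * l)) * cosh l) ^ N"
proof -
  let ?M = "rademacher_vec N" and ?c = "(1 - a) * real N"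
  have "a * real N \<le> real N"
    using mult_right_mono[OF assms(1), of "real N"] by simp
  have finite_M: "finite (set_pmf ?M)"
    by (auto simp: rademacher_vec_def set_Pi_pmf intro!: finite_PiE_dflt)
  have "measure_pmf.expectation ?M (\<lambda>\<epsilon>. max ((\<Sum>i\<in>{1..N}. \<epsilon> i) - a * real N) 0)
      \<le> measure_pmf.expectation ?M (\<lambda>\<epsilon>. ?c * exp (l * ((\<Sum>i\<in>{1..N}. \<epsilon> i) - a * real N)))"
    using assms \<open>a * real N \<le> real N\<close> rademacher_vec_sum_le
    by (intro integral_mono_AE integrable_measure_pmf_finite finite_M AE_pmfI max_le_mult_exp)
       (auto simp: algebra_simps)
  also have "\<dots> = measure_pmf.expectation ?M
                      (\<lambda>\<epsilon>. ?c * exp (- (a * l * real N)) * exp (l * (\<Sum>i\<in>{1..N}. \<epsilon> i)))"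
    by (simp add: right_diff_distrib exp_diff exp_minus field_simps)
  also have "\<dots> = ?c * exp (- (a * l * real N))
                    * measure_pmf.expectation ?M (\<lambda>\<epsilon>. exp (l * (\<Sum>i\<in>{1..N}. \<epsilon> i)))"
    by (rule integral_mult_right_zero)
  also have "\<dots> = ?c * (exp (- (a * l)) * cosh l) ^ N"
    by (simp only: rademacher_vec_mgf) (simp add: power_mult_distrib exp_of_nat_mult[symmetric] mult_ac)
  finally show ?thesis .
qed

theorem lemma5:
  fixes N :: nat and b :: real
  assumes "b > 1"
  shows "measure_pmf.expectation (rademacher_vec N)
           (\<lambda>\<epsilon>. max ((\<Sum>i\<in>{1..N}. \<epsilon> i) - real N / b) 0)
         \<le> (1 - 1 / b) / (exp 1 * binKL ((1 + 1 / b) / 2) (1 / 2))"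
proof -
  define a where "a = 1 / b"
  define D where "D = binKL ((1 + a) / 2) (1 / 2)"
  have a: "0 < a" "a < 1"
    using assms by (auto simp: a_def)
  then have "0 < D"
    unfolding D_def by (intro binKL_half_pos) auto
  have "measure_pmf.expectation (rademacher_vec N)
          (\<lambda>\<epsilon>. max ((\<Sum>i\<in>{1..N}. \<epsilon> i) - a * real N) 0)
        \<le> (1 - a) * real N * (exp (- (a * artanh a)) * cosh (artanh a)) ^ N"
    using a by (intro expectation_rademacher_excess_le artanh_nonneg) auto
  also have "\<dots> = (1 - a) * (real N * D * exp (- (real N * D))) / D"
    using a \<open>0 < D\<close> by (simp add: exp_artanh_mult_cosh D_def exp_of_nat_mult[symmetric])
  also have "\<dots> \<le> (1 - a) * exp (- 1) / D"
    using a \<open>0 < D\<close> mult_exp_neg_le[of "real N * D"]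
    by (intro divide_right_mono mult_left_mono) auto
  finally show ?thesis
    by (simp add: a_def D_def exp_minus field_simps)
qed

end
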